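(* Let $A\in\mathbb{R}_+^{n\times n}$ be a circulant matrix. Then $\mathrm{Attr}(A)=\{x\in\mathbb{R}_+^n:\ \lambda(A)\,A^{n^2}\otimes x=A^{n^2+1}\otimes x\}$.
   Context: Max algebra on $\mathbb{R}_+$: $\oplus=\max$, ordinary product, $(A\otimes x)_i=\max_jA_{i,j}x_j$, $A^t$ max-algebraic power. $\lambda(A)$ is the greatest max-algebraic eigenvalue (maximum cycle geometric mean). $V(A,\lambda)=\{x: A\otimes x=\lambda x\}$ and $\mathrm{Attr}(A)=\{x\in\mathbb{R}_+^n:\ A^t\otimes x\in V(A,\lambda(A))\text{ for some }t\ge0\}$. $A$ is circulant if $A_{i,j}=a_t$ with $t\equiv j-i\pmod n$, $t\in\{0,\dots,n-1\}$, for some $a_0,\dots,a_{n-1}\ge0$. *)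

theory Defs
  imports Complex_Main
begin

text \<open>An n x n matrix is a function
  nat \<Rightarrow> nat \<Rightarrow> real used on indices below n; a vector is nat \<Rightarrow> real
  used on indices below n (0-based indexing).\<close>

definition nonneg_mat :: "nat \<Rightarrow> (nat \<Rightarrow> nat \<Rightarrow> real) \<Rightarrow> bool" where
  "nonneg_mat n A \<longleftrightarrow> (\<forall>i<n. \<forall>j<n. 0 \<le> A i j)"

definition nonneg_vecs :: "nat \<Rightarrow> (nat \<Rightarrow> real) set" where
  "nonneg_vecs n = {x. \<forall>i<n. 0 \<le> x i}"

definition mvec :: "nat \<Rightarrow> (nat \<Rightarrow> nat \<Rightarrow> real) \<Rightarrow> (nat \<Rightarrow> real) \<Rightarrow> nat \<Rightarrow> real" where
  "mvec n A x i = Max {A i j * x j | j. j < n}"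

definition mmult :: "nat \<Rightarrow> (nat \<Rightarrow> nat \<Rightarrow> real) \<Rightarrow> (nat \<Rightarrow> nat \<Rightarrow> real) \<Rightarrow> nat \<Rightarrow> nat \<Rightarrow> real" where
  "mmult n A B i j = Max {A i k * B k j | k. k < n}"

definition mid :: "nat \<Rightarrow> nat \<Rightarrow> real" where
  "mid i j = (if i = j then 1 else 0)"

primrec mpow :: "nat \<Rightarrow> (nat \<Rightarrow> nat \<Rightarrow> real) \<Rightarrow> nat \<Rightarrow> nat \<Rightarrow> nat \<Rightarrow> real" where
  "mpow n A 0 = mid"
| "mpow n A (Suc t) = mmult n A (mpow n A t)"

definition cyc_gm :: "(nat \<Rightarrow> nat \<Rightarrow> real) \<Rightarrow> nat list \<Rightarrow> real" where
  "cyc_gm A c = root (length c)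
     (\<Prod>l<length c. A (c ! l) (c ! ((l + 1) mod length c)))"

definition mlambda :: "nat \<Rightarrow> (nat \<Rightarrow> nat \<Rightarrow> real) \<Rightarrow> real" where
  "mlambda n A = Max {cyc_gm A c | c. 1 \<le> length c \<and> length c \<le> n \<and> (\<forall>v\<in>set c. v < n)}"

definition eigencone :: "nat \<Rightarrow> (nat \<Rightarrow> nat \<Rightarrow> real) \<Rightarrow> real \<Rightarrow> (nat \<Rightarrow> real) set" where
  "eigencone n A lam = {x \<in> nonneg_vecs n. \<forall>i<n. mvec n A x i = lam * x i}"

definition Attr :: "nat \<Rightarrow> (nat \<Rightarrow> nat \<Rightarrow> real) \<Rightarrow> (nat \<Rightarrow> real) set" where
  "Attr n A = {x \<in> nonneg_vecs n. \<exists>t. mvec n (mpow n A t) x \<in> eigencone n A (mlambda n A)}"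

definition circulant :: "nat \<Rightarrow> (nat \<Rightarrow> nat \<Rightarrow> real) \<Rightarrow> bool" where
  "circulant n A \<longleftrightarrow> (\<exists>a::nat \<Rightarrow> real. \<forall>i<n. \<forall>j<n. A i j = a ((j + n - i) mod n))"

end

theory Submission
  imports Defs "HOL-Library.Multiset"
begin

text \<open>Write the circulant as \<open>A i j = a ((j - i) mod n)\<close>. A walk in its digraph takes
  steps of lengths \<open>s < n\<close>, each of weight \<open>a s\<close>, so its weight and endpoint depend only on
  the multiset of step lengths, and the max-algebraic power \<open>A^k\<close> has as \<open>(i, j)\<close> entry the
  largest weight of a walk of length \<open>k\<close> from \<open>i\<close> to \<open>j\<close>. Any \<open>n\<close> equal steps form a closed
  walk. Hence a walk of length \<open>k + n > n (n - 1)\<close> contains \<open>n\<close> equal steps whose removal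
  loses at most the factor \<open>amax^n\<close>, while appending \<open>n\<close> steps of maximal weight \<open>amax\<close> is
  always possible: \<open>A^(k + n) = amax^n A^k\<close> for \<open>k \<ge> (n - 1)^2\<close>. So from then on the orbit
  \<open>A^t x\<close> is periodic up to a scalar. The eigenrelation \<open>A^(t + 1) x = \<lambda> A^t x\<close>, once it
  holds, holds for all later \<open>t\<close>, and the scaled periodicity carries it back to \<open>t = n^2\<close>.
  (In fact \<open>\<lambda>(A) = amax\<close>, but the argument only needs \<open>\<lambda>(A) \<ge> 0\<close>.)\<close>

lemma Max_image_swap:
  assumes "finite I" "I \<noteq> {}" "finite J" "J \<noteq> {}"
  shows "Max ((\<lambda>i. Max (f i ` J)) ` I) = Max ((\<lambda>j. Max ((\<lambda>i. f i j) ` I)) ` J)"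
proof (rule antisym)
  have "f i j \<le> Max ((\<lambda>j. Max ((\<lambda>i. f i j) ` I)) ` J)" if "i \<in> I" "j \<in> J" for i j
  proof -
    have "f i j \<le> Max ((\<lambda>i. f i j) ` I)" using that assms by simp
    also have "\<dots> \<le> Max ((\<lambda>j. Max ((\<lambda>i. f i j) ` I)) ` J)" using that assms by simp
    finally show ?thesis .
  qed
  then show "Max ((\<lambda>i. Max (f i ` J)) ` I) \<le> Max ((\<lambda>j. Max ((\<lambda>i. f i j) ` I)) ` J)"
    using assms by simp
  have "f i j \<le> Max ((\<lambda>i. Max (f i ` J)) ` I)" if "i \<in> I" "j \<in> J" for i j
  proof -
    have "f i j \<le> Max (f i ` J)" using that assms by simp
    also have "\<dots> \<le> Max ((\<lambda>i. Max (f i ` J)) ` I)" using that assms by simp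
    finally show ?thesis .
  qed
  then show "Max ((\<lambda>j. Max ((\<lambda>i. f i j) ` I)) ` J) \<le> Max ((\<lambda>i. Max (f i ` J)) ` I)"
    using assms by simp
qed

lemma Max_lessThan_scale:
  fixes f g :: "nat \<Rightarrow> 'a::linordered_semiring"
  assumes "0 < n" "0 \<le> c" "\<And>j. j < n \<Longrightarrow> f j = c * g j"
  shows "Max (f ` {..<n}) = c * Max (g ` {..<n})"
proof -
  have "mono ((*) c)" using assms(2) by (simp add: mono_def mult_left_mono)
  then have "c * Max (g ` {..<n}) = Max ((*) c ` g ` {..<n})"
    using assms(1) by (intro mono_Max_commute) auto
  also have "(*) c ` g ` {..<n} = f ` {..<n}" using assms(3) by force
  finally show ?thesis by simp
qed

lemma lower_bound_le_Max_lessThan: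
  fixes f :: "nat \<Rightarrow> 'a::linorder"
  assumes "0 < n" "\<And>j. j < n \<Longrightarrow> c \<le> f j"
  shows "c \<le> Max (f ` {..<n})"
  using assms by (intro order.trans[OF _ Max_ge[of _ "f 0"]]) auto

lemma multiset_pigeonhole:
  assumes "set_mset m \<subseteq> A" "finite A" "card A * k < size m"
  shows "\<exists>v\<in>A. k < count m v"
proof (rule ccontr)
  assume "\<not> ?thesis"
  then have "(\<Sum>v\<in>A. count m v) \<le> (\<Sum>v\<in>A. k)" by (intro sum_mono) (simp add: not_less)
  moreover have "size m = (\<Sum>v\<in>A. count m v)"
    unfolding size_multiset_overloaded_eq using assms(1,2)
    by (intro sum.mono_neutral_left) (auto simp: not_in_iff)
  ultimately show False using assms(3) by (simp add: mult.commute)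
qed

lemma mvec_eq_Max_image: "mvec n A x i = Max ((\<lambda>j. A i j * x j) ` {..<n})"
  unfolding mvec_def by (auto intro!: arg_cong[where f = Max])

lemma mmult_eq_Max_image: "mmult n A B i j = Max ((\<lambda>k. A i k * B k j) ` {..<n})"
  unfolding mmult_def by (auto intro!: arg_cong[where f = Max])

lemma mpow_nonneg:
  assumes "nonneg_mat n A"
  shows "nonneg_mat n (mpow n A t)"
  unfolding nonneg_mat_def
proof (induction t)
  case 0 then show ?case by (simp add: mid_def)
next
  case (Suc t)
  have "0 \<le> mmult n A (mpow n A t) i j" if "i < n" "j < n" for i j
    using that Suc assms unfolding mmult_eq_Max_image nonneg_mat_def
    by (intro lower_bound_le_Max_lessThan) auto
  then show ?case by simp
qed

lemma mvec_nonneg: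
  assumes "nonneg_mat n P" "x \<in> nonneg_vecs n"
  shows "mvec n P x \<in> nonneg_vecs n"
  using assms unfolding nonneg_vecs_def nonneg_mat_def mvec_eq_Max_image
  by (auto intro!: lower_bound_le_Max_lessThan)

lemma mvec_mpow_Suc:
  assumes A: "nonneg_mat n A" and x: "x \<in> nonneg_vecs n" and i: "i < n"
  shows "mvec n (mpow n A (Suc t)) x i = mvec n A (mvec n (mpow n A t) x) i"
proof -
  let ?P = "mpow n A t"
  have n: "{..<n} \<noteq> {}" "finite {..<n}" using i by auto
  have "mvec n (mpow n A (Suc t)) x i = (MAX j\<in>{..<n}. (MAX k\<in>{..<n}. A i k * ?P k j) * x j)"
    by (simp add: mvec_eq_Max_image mmult_eq_Max_image)
  also have "\<dots> = (MAX j\<in>{..<n}. MAX k\<in>{..<n}. A i k * ?P k j * x j)"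
  proof (intro arg_cong[where f = Max] image_cong refl)
    fix j assume "j \<in> {..<n}"
    then show "(MAX k\<in>{..<n}. A i k * ?P k j) * x j = (MAX k\<in>{..<n}. A i k * ?P k j * x j)"
      using Max_lessThan_scale[of n "x j" "\<lambda>k. A i k * ?P k j * x j" "\<lambda>k. A i k * ?P k j"] x i
      by (simp add: nonneg_vecs_def mult.commute)
  qed
  also have "\<dots> = (MAX k\<in>{..<n}. MAX j\<in>{..<n}. A i k * ?P k j * x j)"
    using n by (intro Max_image_swap[where f = "\<lambda>j k. A i k * ?P k j * x j"])
  also have "\<dots> = (MAX k\<in>{..<n}. A i k * (MAX j\<in>{..<n}. ?P k j * x j))"
  proof (intro arg_cong[where f = Max] image_cong refl)
    fix k assume "k \<in> {..<n}"
    then show "(MAX j\<in>{..<n}. A i k * ?P k j * x j) = A i k * (MAX j\<in>{..<n}. ?P k j * x j)"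
      using A i by (intro Max_lessThan_scale) (auto simp: nonneg_mat_def)
  qed
  also have "\<dots> = mvec n A (mvec n ?P x) i"
    by (simp add: mvec_eq_Max_image)
  finally show ?thesis .
qed

lemma mlambda_nonneg:
  assumes "0 < n" "nonneg_mat n A"
  shows "0 \<le> mlambda n A"
proof -
  let ?C = "{c. set c \<subseteq> {..<n} \<and> length c \<le> n}"
  let ?S = "{cyc_gm A c | c. 1 \<le> length c \<and> length c \<le> n \<and> (\<forall>v\<in>set c. v < n)}"
  have "finite ?C" by (rule finite_lists_length_le) simp
  moreover have "?S \<subseteq> cyc_gm A ` ?C" by auto
  ultimately have "finite ?S" by (meson finite_imageI finite_subset)
  moreover have "cyc_gm A [0] \<in> ?S" using assms(1) by (auto intro!: exI[of _ "[0]"])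
  ultimately have "cyc_gm A [0] \<le> mlambda n A" unfolding mlambda_def by (rule Max_ge)
  moreover have "cyc_gm A [0] = A 0 0" by (simp add: cyc_gm_def)
  moreover have "0 \<le> A 0 0" using assms by (simp add: nonneg_mat_def)
  ultimately show ?thesis by simp
qed

lemma orbit_in_eigencone_iff:
  assumes "nonneg_mat n A" "x \<in> nonneg_vecs n"
  shows "mvec n (mpow n A t) x \<in> eigencone n A lam \<longleftrightarrow>
    (\<forall>i<n. mvec n (mpow n A (Suc t)) x i = lam * mvec n (mpow n A t) x i)"
  using assms mvec_nonneg[OF mpow_nonneg] by (auto simp: eigencone_def mvec_mpow_Suc simp del: mpow.simps)

lemma orbit_eigen_relation_Suc:
  assumes A: "nonneg_mat n A" and x: "x \<in> nonneg_vecs n" and "0 \<le> lam"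
    and eig: "\<forall>i<n. mvec n (mpow n A (Suc t)) x i = lam * mvec n (mpow n A t) x i"
  shows "\<forall>i<n. mvec n (mpow n A (Suc (Suc t))) x i = lam * mvec n (mpow n A (Suc t)) x i"
proof (intro allI impI)
  fix i assume i: "i < n"
  have "mvec n (mpow n A (Suc (Suc t))) x i = mvec n A (mvec n (mpow n A (Suc t)) x) i"
    using A x i by (rule mvec_mpow_Suc)
  also have "\<dots> = lam * mvec n A (mvec n (mpow n A t) x) i"
    using i \<open>0 \<le> lam\<close> eig unfolding mvec_eq_Max_image[of n A]
    by (intro Max_lessThan_scale) (auto simp del: mpow.simps)
  also have "\<dots> = lam * mvec n (mpow n A (Suc t)) x i"
    using mvec_mpow_Suc[OF A x i] by simp
  finally show "mvec n (mpow n A (Suc (Suc t))) x i = lam * mvec n (mpow n A (Suc t)) x i" .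
qed

lemma eigen_relation_at_scaled_period:
  fixes y :: "nat \<Rightarrow> nat \<Rightarrow> real"
  assumes persist: "\<And>t. \<forall>i<n. y (Suc t) i = lam * y t i \<Longrightarrow> \<forall>i<n. y (Suc (Suc t)) i = lam * y (Suc t) i"
    and period: "\<And>s i. N\<^sub>0 \<le> s \<Longrightarrow> i < n \<Longrightarrow> y (s + p) i = c * y s i"
    and "0 < p" "N\<^sub>0 + p \<le> N"
    and eig: "\<forall>i<n. y (Suc t) i = lam * y t i"
  shows "\<forall>i<n. y (Suc N) i = lam * y N i"
proof (cases "c = 0")
  case True
  have "y s i = 0" if "N\<^sub>0 + p \<le> s" "i < n" for s i
    using period[of "s - p" i] that True by simp
  then show ?thesis using \<open>N\<^sub>0 + p \<le> N\<close> by simp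
next
  case False
  have eig_from: "\<forall>i<n. y (Suc (t + d)) i = lam * y (t + d) i" for d
    by (induction d) (use eig persist in auto)
  have iter: "y (s + q * p) i = c ^ q * y s i" if "N\<^sub>0 \<le> s" "i < n" for s q i
  proof (induction q)
    case (Suc q)
    have "y (s + Suc q * p) = y ((s + q * p) + p)" by (simp add: algebra_simps)
    then show ?case using period[of "s + q * p" i] that Suc by simp
  qed simp
  have "t \<le> N + t * p" using \<open>0 < p\<close> by (simp add: trans_le_add2)
  then obtain d where d: "N + t * p = t + d" using le_Suc_ex by blast
  show ?thesis
  proof (intro allI impI)
    fix i assume i: "i < n"
    have "c ^ t * y (Suc N) i = y (Suc N + t * p) i" using iter[of "Suc N" i t] i assms(4) by simp
    also have "\<dots> = lam * y (N + t * p) i" using eig_from[of d] d i by simp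
    also have "\<dots> = c ^ t * (lam * y N i)" using iter[of N i t] i assms(4) by simp
    finally show "y (Suc N) i = lam * y N i" using False by simp
  qed
qed

locale nonneg_circulant =
  fixes n :: nat and A :: "nat \<Rightarrow> nat \<Rightarrow> real" and a :: "nat \<Rightarrow> real"
  assumes nonneg: "nonneg_mat n A"
    and entry: "\<And>i j. i < n \<Longrightarrow> j < n \<Longrightarrow> A i j = a ((j + n - i) mod n)"
begin

lemma step_entry:
  assumes "i < n" "s < n"
  shows "A i ((i + s) mod n) = a s"
proof -
  have "((i + s) mod n + n - i) mod n = s" using assms by (cases "i + s < n") (auto simp: mod_if)
  then show ?thesis using assms entry by simp
qed

lemma a_nonneg:
  assumes "l < n"
  shows "0 \<le> a l"
proof -
  have "0 < n" using assms by simp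
  then have "0 \<le> A 0 l" using nonneg assms by (simp add: nonneg_mat_def)
  then show ?thesis using step_entry[of 0 l] \<open>0 < n\<close> assms by simp
qed

text \<open>A walk is encoded by the multiset of its step lengths: the step \<open>s\<close> leads from
  \<open>v\<close> to \<open>(v + s) mod n\<close> with weight \<open>a s\<close>.\<close>

definition weight :: "nat multiset \<Rightarrow> real" where
  "weight m = (\<Prod>s\<in>#m. a s)"

definition walks :: "nat \<Rightarrow> nat \<Rightarrow> nat \<Rightarrow> nat multiset set" where
  "walks k i j = {m. size m = k \<and> set_mset m \<subseteq> {..<n} \<and> (i + sum_mset m) mod n = j}"

lemma weight_nonneg: "set_mset m \<subseteq> {..<n} \<Longrightarrow> 0 \<le> weight m"
  unfolding weight_def by (induction m) (auto intro: mult_nonneg_nonneg a_nonneg)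

lemma weight_le_mpow:
  "m \<in> walks k i j \<Longrightarrow> i < n \<Longrightarrow> weight m \<le> mpow n A k i j"
  unfolding walks_def
proof (induction m arbitrary: i j k)
  case empty then show ?case by (simp add: weight_def mid_def)
next
  case (add s m)
  define l where "l = (i + s) mod n"
  have l: "l < n" and s: "s < n" using add.prems by (auto simp: l_def)
  have m: "m \<in> {m'. size m' = k - 1 \<and> set_mset m' \<subseteq> {..<n} \<and> (l + sum_mset m') mod n = j}"
    using add.prems by (auto simp: l_def mod_add_left_eq add.assoc)
  have "weight (add_mset s m) = A i l * weight m"
    using step_entry[OF add.prems(2) s] by (simp add: weight_def l_def)
  also have "\<dots> \<le> A i l * mpow n A (k - 1) l j"
    using add.IH[OF m l] nonneg add.prems l by (intro mult_left_mono) (auto simp: nonneg_mat_def)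
  also have "\<dots> \<le> mpow n A k i j"
    using add.prems l by (auto simp: mmult_eq_Max_image intro!: Max_ge)
  finally show ?case .
qed

lemma mpow_attained_by_walk:
  "i < n \<Longrightarrow> mpow n A t i j = 0 \<or> (\<exists>m\<in>walks t i j. mpow n A t i j = weight m)"
proof (induction t arbitrary: i)
  case 0
  then show ?case
    by (cases "i = j") (auto simp: mid_def walks_def weight_def intro!: bexI[of _ "{#}"])
next
  case (Suc t)
  have "mpow n A (Suc t) i j \<in> (\<lambda>l. A i l * mpow n A t l j) ` {..<n}"
    using Suc.prems by (simp add: mmult_eq_Max_image lessThan_empty_iff)
  then obtain l where l: "l < n" "mpow n A (Suc t) i j = A i l * mpow n A t l j" by auto
  from Suc.IH[OF l(1)] show ?case
  proof
    assume "mpow n A t l j = 0"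
    then show ?thesis using l by simp
  next
    assume "\<exists>m\<in>walks t l j. mpow n A t l j = weight m"
    then obtain m where m: "m \<in> walks t l j" "mpow n A t l j = weight m" by blast
    define s where "s = (l + n - i) mod n"
    have s: "s < n" using l by (simp add: s_def)
    have "(i + s) mod n = l"
    proof -
      have "(i + s) mod n = (i + (l + n - i)) mod n" by (simp add: s_def mod_add_right_eq)
      also have "i + (l + n - i) = l + n" using Suc.prems by simp
      finally show ?thesis using l by simp
    qed
    then have "add_mset s m \<in> walks (Suc t) i j"
      using m(1) s by (auto simp: walks_def mod_add_left_eq add.assoc)
    moreover have "A i l = a s" using entry Suc.prems l by (simp add: s_def)
    moreover have "weight (add_mset s m) = a s * weight m" by (simp add: weight_def)
    ultimately show ?thesis using l m by metis
  qed
qed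

definition amax :: real where
  "amax = Max (a ` {..<n})"

lemma amax_ge: "l < n \<Longrightarrow> a l \<le> amax"
  by (simp add: amax_def)

lemma amax_nonneg: "0 < n \<Longrightarrow> 0 \<le> amax"
  using a_nonneg amax_ge order.trans by blast

lemma amax_attained:
  assumes "0 < n"
  obtains l where "l < n" "a l = amax"
proof -
  have "amax \<in> a ` {..<n}" unfolding amax_def using assms by (intro Max_in) auto
  then show ?thesis using that by auto
qed

lemma amax_pow_mult_mpow_le:
  assumes "i < n" "j < n"
  shows "amax ^ n * mpow n A k i j \<le> mpow n A (k + n) i j"
  using mpow_attained_by_walk[OF assms(1), of k j]
proof
  assume "mpow n A k i j = 0"
  then show ?thesis using mpow_nonneg[OF nonneg] assms by (simp add: nonneg_mat_def)
next
  assume "\<exists>m\<in>walks k i j. mpow n A k i j = weight m"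
  then obtain m where m: "m \<in> walks k i j" "mpow n A k i j = weight m" by blast
  obtain l where l: "l < n" "a l = amax" using amax_attained assms(1) by auto
  have "m + replicate_mset n l \<in> walks (k + n) i j"
    using m(1) l(1) by (auto simp: walks_def add.assoc[symmetric])
  then have "weight (m + replicate_mset n l) \<le> mpow n A (k + n) i j"
    using assms(1) by (rule weight_le_mpow)
  then show ?thesis using m(2) l(2) by (simp add: weight_def mult.commute)
qed

lemma mpow_le_amax_pow_mult:
  assumes "(n - 1)\<^sup>2 \<le> k" "i < n" "j < n"
  shows "mpow n A (k + n) i j \<le> amax ^ n * mpow n A k i j"
  using mpow_attained_by_walk[OF assms(2), of "k + n" j]
proof
  assume "mpow n A (k + n) i j = 0"
  then show ?thesis
    using mpow_nonneg[OF nonneg] amax_nonneg assms by (simp add: nonneg_mat_def)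
next
  assume "\<exists>m\<in>walks (k + n) i j. mpow n A (k + n) i j = weight m"
  then obtain m where m: "m \<in> walks (k + n) i j" "mpow n A (k + n) i j = weight m" by blast
  txt \<open>Pigeonhole: some step length occurs \<open>n\<close> times; those steps add up to a closed walk.\<close>
  have "n * (n - 1) < k + n" using assms(1,2) by (cases n) (auto simp: power2_eq_square)
  then obtain v where v: "v < n" "n - 1 < count m v"
    using multiset_pigeonhole[of m "{..<n}" "n - 1"] m(1) by (auto simp: walks_def)
  define m' where "m' = m - replicate_mset n v"
  have m_eq: "m = m' + replicate_mset n v"
    using v by (simp add: m'_def count_le_replicate_mset_subset_eq[symmetric])
  have "m' \<in> walks k i j"
  proof -
    have "(i + sum_mset m') mod n = (i + sum_mset m) mod n"
      by (simp add: m_eq add.assoc[symmetric])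
    then show ?thesis using m(1) by (auto simp: walks_def m_eq)
  qed
  then have "weight m' \<le> mpow n A k i j" using assms(2) by (rule weight_le_mpow)
  moreover have "weight m = a v ^ n * weight m'" by (simp add: m_eq weight_def)
  moreover have "0 \<le> weight m'" using \<open>m' \<in> walks k i j\<close> by (auto simp: walks_def intro: weight_nonneg)
  ultimately show ?thesis
    using m(2) v(1) a_nonneg amax_ge amax_nonneg by (auto intro!: mult_mono power_mono)
qed

lemma mpow_add_n:
  assumes "(n - 1)\<^sup>2 \<le> k" "i < n" "j < n"
  shows "mpow n A (k + n) i j = amax ^ n * mpow n A k i j"
  using assms by (intro antisym mpow_le_amax_pow_mult amax_pow_mult_mpow_le)

lemma orbit_add_n:
  assumes "(n - 1)\<^sup>2 \<le> s" "i < n"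
  shows "mvec n (mpow n A (s + n)) x i = amax ^ n * mvec n (mpow n A s) x i"
  unfolding mvec_eq_Max_image using assms
  by (intro Max_lessThan_scale) (auto simp: mpow_add_n amax_nonneg)

end

theorem proposition3:
  fixes n :: nat and A :: "nat \<Rightarrow> nat \<Rightarrow> real"
  assumes "1 \<le> n"
    and "nonneg_mat n A"
    and "circulant n A"
  shows "Attr n A = {x \<in> nonneg_vecs n.
           \<forall>i<n. mlambda n A * mvec n (mpow n A (n^2)) x i = mvec n (mpow n A (n^2 + 1)) x i}"
proof -
  obtain a where "\<forall>i<n. \<forall>j<n. A i j = a ((j + n - i) mod n)"
    using assms(3) unfolding circulant_def by blast
  then interpret nonneg_circulant n A a using assms(2) by unfold_locales auto
  have n: "0 < n" "(n - 1)\<^sup>2 + n \<le> n\<^sup>2" using assms(1) by (cases n; simp add: power2_eq_square)+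
  have lam: "0 \<le> mlambda n A" using n(1) assms(2) by (rule mlambda_nonneg)
  have "x \<in> Attr n A \<longleftrightarrow> mvec n (mpow n A (n\<^sup>2)) x \<in> eigencone n A (mlambda n A)"
    if x: "x \<in> nonneg_vecs n" for x
  proof
    assume "x \<in> Attr n A"
    then obtain t where "mvec n (mpow n A t) x \<in> eigencone n A (mlambda n A)"
      by (auto simp: Attr_def)
    then show "mvec n (mpow n A (n\<^sup>2)) x \<in> eigencone n A (mlambda n A)"
      using eigen_relation_at_scaled_period[where y = "\<lambda>t. mvec n (mpow n A t) x",
          OF orbit_eigen_relation_Suc[OF assms(2) x lam] orbit_add_n n]
      by (simp add: orbit_in_eigencone_iff[OF assms(2) x])
  qed (use x in \<open>auto simp: Attr_def\<close>)
  moreover have "Attr n A \<subseteq> nonneg_vecs n" by (auto simp: Attr_def)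
  ultimately show ?thesis
    using orbit_in_eigencone_iff[OF assms(2)] by (auto simp del: mpow.simps)
qed

end
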